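(* Let $m\ge2$, $q\ge2$ be integers, $\Omega$ a nonempty closed subset of $\Sigma_m$, $\overline{t}$ the unique vector in $[1,m^{1/(q-1)}]^{\mathrm{Pref}(\Omega)}$ with $t_u^q=\sum_{j:\,uj\in\mathrm{Pref}(\Omega)}t_{uj}$, $\mu$ the probability measure on $\Omega$ with $\mu[u]=\prod_{j=1}^k t_{u_1\cdots u_j}/t^q_{u_1\cdots u_{j-1}}$ for $u\in\mathrm{Pref}_k(\Omega)$, and $\mathbb{P}_\mu$ the corresponding measure on $X_\Omega$. For $x\in X_\Omega$ and $\ell\ge1$ put $$a_\ell(x):=\frac{-\log_m\mathbb{P}_\mu[x_1^{n}]}{n},\qquad n=q^\ell.$$ Then for every $x\in X_\Omega$, $$\lim_{\ell\to\infty}\frac{a_1(x)+\cdots+a_\ell(x)}{\ell}=(q-1)\log_m t_\varnothing,$$ and in particular $\liminf_{\ell\to\infty}a_\ell(x)\le(q-1)\log_m t_\varnothing$ for every $x\in X_\Omega$.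
   Context: $\Sigma_m=\{0,\dots,m-1\}^{\mathbb N}$; $[u]$ is the cylinder of sequences beginning with word $u$; $x_1^n=x_1\cdots x_n$. $\mathrm{Pref}_0(\Omega)=\{\varnothing\}$, $\mathrm{Pref}_k(\Omega)=\{u\in\{0,\dots,m-1\}^k:\ \Omega\cap[u]\ne\emptyset\}$, $\mathrm{Pref}(\Omega)=\bigcup_k\mathrm{Pref}_k(\Omega)$. $X_\Omega := \{x\in\Sigma_m:\ (x_{iq^\ell})_{\ell\ge0}\in\Omega \text{ for all } i\ge1,\ q\nmid i\}$. For $q\nmid i$, $J_i=\{q^ri\}_{r\ge0}$ and $u|J_i=u_iu_{qi}\cdots u_{q^ri}$ with $q^ri\le|u|<q^{r+1}i$; $\mathbb{P}_\mu[u]=\prod_{i\le|u|,\,q\nmid i}\mu[u|J_i]$. *)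

theory Defs
  imports "HOL-Analysis.Analysis"
begin

text \<open>Sequences in \<Sigma>_m are functions nat \<Rightarrow> nat; the paper's x_k (k \<ge> 1) is x (k - 1).
  Words are lists; the paper's u_k (k \<ge> 1) is u ! (k - 1).
  The topology on nat \<Rightarrow> nat is the product topology of discrete nat.\<close>

definition Sigma :: "nat \<Rightarrow> (nat \<Rightarrow> nat) set" where
  "Sigma m = {x. \<forall>i. x i < m}"

definition cyl :: "nat list \<Rightarrow> (nat \<Rightarrow> nat) set" where
  "cyl u = {x. map x [0..<length u] = u}"

definition Pref_k :: "nat \<Rightarrow> nat \<Rightarrow> (nat \<Rightarrow> nat) set \<Rightarrow> nat list set" where
  "Pref_k m k \<Omega> = {u. length u = k \<and> (\<forall>a\<in>set u. a < m) \<and> \<Omega> \<inter> cyl u \<noteq> {}}"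

definition Pref :: "nat \<Rightarrow> (nat \<Rightarrow> nat) set \<Rightarrow> nat list set" where
  "Pref m \<Omega> = (\<Union>k. Pref_k m k \<Omega>)"

definition X_Omega :: "nat \<Rightarrow> nat \<Rightarrow> (nat \<Rightarrow> nat) set \<Rightarrow> (nat \<Rightarrow> nat) set" where
  "X_Omega m q \<Omega> = {x \<in> Sigma m. \<forall>i. 1 \<le> i \<and> \<not> q dvd i \<longrightarrow> (\<lambda>l. x (i * q ^ l - 1)) \<in> \<Omega>}"

definition mu_cyl :: "nat \<Rightarrow> nat \<Rightarrow> (nat \<Rightarrow> nat) set \<Rightarrow> (nat list \<Rightarrow> real) \<Rightarrow> nat list \<Rightarrow> real" where
  "mu_cyl m q \<Omega> t u = (if u \<in> Pref m \<Omega>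
      then (\<Prod>j=1..length u. t (take j u) / t (take (j - 1) u) ^ q) else 0)"

text \<open>u|J_i = u_i u_{qi} ... u_{q^r i}, with q^r i \<le> |u| < q^(r+1) i.\<close>
definition restrJ :: "nat \<Rightarrow> nat list \<Rightarrow> nat \<Rightarrow> nat list" where
  "restrJ q u i = map (\<lambda>r. u ! (q ^ r * i - 1)) (filter (\<lambda>r. q ^ r * i \<le> length u) [0..<length u + 1])"

definition P_mu :: "nat \<Rightarrow> nat \<Rightarrow> (nat \<Rightarrow> nat) set \<Rightarrow> (nat list \<Rightarrow> real) \<Rightarrow> nat list \<Rightarrow> real" where
  "P_mu m q \<Omega> t u = (\<Prod>i \<in> {i. 1 \<le> i \<and> i \<le> length u \<and> \<not> q dvd i}. mu_cyl m q \<Omega> t (restrJ q u i))"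

definition a_seq :: "nat \<Rightarrow> nat \<Rightarrow> (nat \<Rightarrow> nat) set \<Rightarrow> (nat list \<Rightarrow> real) \<Rightarrow> nat \<Rightarrow> (nat \<Rightarrow> nat) \<Rightarrow> real" where
  "a_seq m q \<Omega> t l x = (let n = q ^ l in - log m (P_mu m q \<Omega> t (map x [0..<n])) / n)"

end

theory Submission
  imports Defs
begin

(*
  Every index k >= 1 is uniquely of the form q^r * i with q not dividing i, so a
  word of length n splits into the "orbit words"  x_i x_{qi} x_{q^2 i} ...  (i <= n, q not
  dividing i), the orbit of i contributing  orbit_len q n i  letters.  Writing
  g i j = ln t(first j letters of the orbit of i), the product formula for mu[u] turns
  ln P_mu[x_1^n] into a sum over orbits of  g i j - q * g i (j-1).  Passing from n to q*n adds
  exactly one letter to every old orbit and opens the new orbits n < i <= q n with one letter,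
  so the orbit sums S(n) = sum_i sum_{j <= len} g i j satisfy a two-term recursion and
    a_(l+1) = (q - 1) log_m t_empty + (b_l - b_(l+1)),   b_l = S(q^l) / (q^l ln m).
  Since 1 <= t <= m^(1/(q-1)), the sequence b is bounded, and the Cesaro limit and the liminf
  bound both follow from an elementary fact about bounded telescoping perturbations of a
  constant.  Only the bounds on t enter.
*)

section \<open>Bounded telescoping perturbations of a constant\<close>

lemma telescoping_partial_sum:
  fixes a b :: "nat \<Rightarrow> real"
  assumes "\<And>l. a (Suc l) = c + (b l - b (Suc l))"
  shows "(\<Sum>k=1..l. a k) = real l * c + (b 0 - b l)"
proof -
  have "(\<Sum>k=1..l. a k) = (\<Sum>k<l. c + (b k - b (Suc k)))"
    using sum.atLeast1_atMost_eq[of a l] assms by simp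
  also have "\<dots> = real l * c + (b 0 - b l)"
    by (simp add: sum.distrib sum_lessThan_telescope')
  finally show ?thesis .
qed

lemma telescoping_cesaro:
  fixes a b :: "nat \<Rightarrow> real"
  assumes step: "\<And>l. a (Suc l) = c + (b l - b (Suc l))" and bnd: "\<And>l. \<bar>b l\<bar> \<le> M"
  shows "(\<lambda>l. (\<Sum>k=1..l. a k) / real l) \<longlonglongrightarrow> c"
proof -
  have err: "(\<lambda>l. (b 0 - b l) / real l) \<longlonglongrightarrow> 0"
  proof (rule Lim_null_comparison)
    have "norm ((b 0 - b l) / real l) \<le> 2 * M / real l" for l
    proof -
      have "\<bar>b 0 - b l\<bar> \<le> 2 * M" using bnd[of 0] bnd[of l] by linarith
      then show ?thesis by (simp add: divide_right_mono)
    qed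
    then show "\<forall>\<^sub>F l in sequentially. norm ((b 0 - b l) / real l) \<le> 2 * M / real l"
      by simp
  qed (rule lim_const_over_n)
  have "(\<lambda>l. c + (b 0 - b l) / real l) \<longlonglongrightarrow> c + 0"
    by (intro tendsto_add tendsto_const err)
  moreover have "\<forall>\<^sub>F l in sequentially. c + (b 0 - b l) / real l = (\<Sum>k=1..l. a k) / real l"
    using eventually_ge_at_top[of 1]
  proof eventually_elim
    case (elim l)
    then show ?case
      unfolding telescoping_partial_sum[where a = a and b = b, OF step] by (simp add: field_simps)
  qed
  ultimately show ?thesis by (simp add: tendsto_cong)
qed

text \<open>If such a sequence stayed above some d > c, b would decrease by a fixed amount at
  every step and become unbounded; hence its liminf is at most c.\<close>
lemma telescoping_liminf:
  fixes a b :: "nat \<Rightarrow> real"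
  assumes step: "\<And>l. a (Suc l) = c + (b l - b (Suc l))" and bnd: "\<And>l. \<bar>b l\<bar> \<le> M"
  shows "liminf (\<lambda>l. ereal (a l)) \<le> ereal c"
proof (rule ccontr)
  assume "\<not> ?thesis"
  then have "ereal c < liminf (\<lambda>l. ereal (a l))" by simp
  then obtain d where cd: "ereal c < ereal d" and d: "ereal d < liminf (\<lambda>l. ereal (a l))"
    using ereal_dense2 by blast
  from cd have "c < d" by simp
  obtain N where N: "\<And>l. l \<ge> N \<Longrightarrow> d < a l"
    using less_LiminfD[OF d] unfolding eventually_sequentially by auto
  have descent: "b (N + n) \<le> b N - real n * (d - c)" for n
  proof (induction n)
    case (Suc n)
    have "d < a (Suc (N + n))" using N by simp
    then show ?case using Suc step[of "N + n"] by (simp add: algebra_simps)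
  qed simp
  obtain n where "2 * M < real n * (d - c)"
    using ex_less_of_nat_mult[of "d - c"] \<open>c < d\<close> by auto
  with descent[of n] bnd[of N] bnd[of "N + n"] show False by linarith
qed

section \<open>Orbit lengths\<close>

text \<open>The indices not divisible by q, up to n; they label the orbits {q^r i}.\<close>
definition nondiv_upto :: "nat \<Rightarrow> nat \<Rightarrow> nat set" where
  "nondiv_upto q n = {i. 1 \<le> i \<and> i \<le> n \<and> \<not> q dvd i}"

text \<open>The number of indices q^r i of the orbit of i lying in {1..n}.\<close>
definition orbit_len :: "nat \<Rightarrow> nat \<Rightarrow> nat \<Rightarrow> nat" where
  "orbit_len q n i = (LEAST r. n < q ^ r * i)"

lemma finite_nondiv_upto [simp]: "finite (nondiv_upto q n)"
  unfolding nondiv_upto_def by auto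

lemma orbit_exits:
  fixes q i n :: nat
  assumes "q \<ge> 2" "i \<ge> 1"
  shows "n < q ^ n * i"
proof -
  have "n < 2 ^ n" by (rule less_exp)
  also have "\<dots> \<le> q ^ n" using assms(1) by (simp add: power_mono)
  also have "\<dots> \<le> q ^ n * i" using assms(2) by simp
  finally show ?thesis .
qed

lemma orbit_len_iff:
  fixes q i n r :: nat
  assumes "q \<ge> 2" "i \<ge> 1"
  shows "q ^ r * i \<le> n \<longleftrightarrow> r < orbit_len q n i"
proof
  have beyond: "n < q ^ orbit_len q n i * i"
    unfolding orbit_len_def using orbit_exits[OF assms] by (rule LeastI)
  assume "q ^ r * i \<le> n"
  then have "q ^ r * i < q ^ orbit_len q n i * i" using beyond by linarith
  then have "q ^ r < q ^ orbit_len q n i" by simp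
  then show "r < orbit_len q n i" using assms(1) by (simp add: power_less_imp_less_exp)
next
  assume "r < orbit_len q n i"
  then show "q ^ r * i \<le> n" unfolding orbit_len_def using not_less_Least by fastforce
qed

lemma orbit_len_le:
  assumes "q \<ge> 2" "i \<ge> 1"
  shows "orbit_len q n i \<le> n"
  using orbit_exits[OF assms, of n] orbit_len_iff[OF assms, of n n] by simp

lemma orbit_len_pos:
  assumes "q \<ge> 2" "1 \<le> i" "i \<le> n"
  shows "orbit_len q n i \<ge> 1"
  using orbit_len_iff[OF assms(1,2), of 0 n] assms(3) by simp

lemma orbit_len_mult:
  assumes "q \<ge> 2" "1 \<le> i" "i \<le> q * n"
  shows "orbit_len q (q * n) i = Suc (orbit_len q n i)"
proof -
  have "r < orbit_len q (q * n) i \<longleftrightarrow> r < Suc (orbit_len q n i)" for r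
  proof (cases r)
    case 0
    then show ?thesis using orbit_len_iff[OF assms(1,2), of 0 "q * n"] assms(3) by simp
  next
    case (Suc r')
    have "q ^ r * i \<le> q * n \<longleftrightarrow> q ^ r' * i \<le> n" using assms(1) by (simp add: Suc)
    then show ?thesis
      using orbit_len_iff[OF assms(1,2), of r "q * n"] orbit_len_iff[OF assms(1,2), of r' n] Suc
      by simp
  qed
  then show ?thesis by (metis less_irrefl nat_neq_iff)
qed

lemma orbit_len_beyond:
  assumes "q \<ge> 2" "1 \<le> i" "n < i"
  shows "orbit_len q n i = 0"
  using orbit_len_iff[OF assms(1,2), of 0 n] assms(3) by simp

text \<open>Exactly n of the numbers 1..q n are multiples of q.\<close>
lemma card_nondiv_upto_mult:
  assumes "q \<ge> 1"
  shows "card (nondiv_upto q (q * n)) = q * n - n"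
proof -
  let ?A = "nondiv_upto q (q * n)" and ?M = "(\<lambda>j. q * j) ` {1..n}"
  have "{1..q * n} = ?A \<union> ?M"
  proof (intro equalityI subsetI)
    fix i assume i: "i \<in> {1..q * n}"
    show "i \<in> ?A \<union> ?M"
    proof (cases "q dvd i")
      case True
      then obtain j where j: "i = q * j" by auto
      have "q * j \<le> q * n" using i j by simp
      then have "j \<le> n" using assms by simp
      moreover have "1 \<le> j" using i j by (cases j) auto
      ultimately show ?thesis using j by auto
    qed (use i in \<open>auto simp: nondiv_upto_def\<close>)
  qed (use assms in \<open>auto simp: nondiv_upto_def\<close>)
  moreover have "?A \<inter> ?M = {}" by (auto simp: nondiv_upto_def)
  moreover have "card ?M = n" using assms by (subst card_image) (auto simp: inj_on_def)
  ultimately have "q * n = card ?A + n"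
    by (metis card_Un_disjoint card_atLeastAtMost diff_Suc_1 finite_Un finite_atLeastAtMost)
  then show ?thesis by simp
qed

section \<open>Orbit words\<close>

definition orbit_word :: "nat \<Rightarrow> (nat \<Rightarrow> nat) \<Rightarrow> nat \<Rightarrow> nat \<Rightarrow> nat list" where
  "orbit_word q x i k = map (\<lambda>r. x (i * q ^ r - 1)) [0..<k]"

lemma length_orbit_word [simp]: "length (orbit_word q x i k) = k"
  by (simp add: orbit_word_def)

lemma take_orbit_word: "j \<le> k \<Longrightarrow> take j (orbit_word q x i k) = orbit_word q x i j"
  by (simp add: orbit_word_def take_map min_absorb1)

lemma orbit_word_Pref:
  assumes "x \<in> X_Omega m q \<Omega>" "\<Omega> \<subseteq> Sigma m" "1 \<le> i" "\<not> q dvd i"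
  shows "orbit_word q x i k \<in> Pref m \<Omega>"
proof -
  have y: "(\<lambda>l. x (i * q ^ l - 1)) \<in> \<Omega>" using assms(1,3,4) unfolding X_Omega_def by auto
  then have "\<forall>l. x (i * q ^ l - 1) < m" using assms(2) unfolding Sigma_def by auto
  with y have "orbit_word q x i k \<in> Pref_k m k \<Omega>"
    unfolding Pref_k_def cyl_def orbit_word_def by auto
  then show ?thesis unfolding Pref_def by auto
qed

lemma restrJ_prefix:
  assumes "q \<ge> 2" "1 \<le> i"
  shows "restrJ q (map x [0..<n]) i = orbit_word q x i (orbit_len q n i)"
proof -
  have "filter (\<lambda>r. q ^ r * i \<le> n) [0..<n + 1] = filter (\<lambda>r. r < orbit_len q n i) [0..<n + 1]"
    using orbit_len_iff[OF assms] by (intro filter_cong) auto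
  also have "\<dots> = [0..<orbit_len q n i]"
  proof -
    have "filter (\<lambda>r. r < k) [0..<N] = [0..<min k N]" for k N by (induction N) auto
    then show ?thesis using orbit_len_le[OF assms, of n] by (simp add: min_absorb1)
  qed
  finally have range: "filter (\<lambda>r. q ^ r * i \<le> n) [0..<n + 1] = [0..<orbit_len q n i]" .
  have letter: "map x [0..<n] ! (q ^ r * i - 1) = x (i * q ^ r - 1)" if "r < orbit_len q n i" for r
  proof -
    have "q ^ r * i \<le> n" using that orbit_len_iff[OF assms] by simp
    moreover have "0 < q ^ r * i" using assms by simp
    ultimately have "q ^ r * i - 1 < n" by linarith
    then show ?thesis by (simp add: mult.commute)
  qed
  have "restrJ q (map x [0..<n]) i = map (\<lambda>r. map x [0..<n] ! (q ^ r * i - 1)) [0..<orbit_len q n i]"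
    unfolding restrJ_def length_map length_upt diff_zero range ..
  also have "\<dots> = orbit_word q x i (orbit_len q n i)"
    unfolding orbit_word_def using letter by simp
  finally show ?thesis .
qed

section \<open>The logarithm of mu and of P_mu\<close>

lemma Pref_take:
  assumes "u \<in> Pref m \<Omega>"
  shows "take j u \<in> Pref m \<Omega>"
proof -
  obtain y where y: "y \<in> \<Omega>" "map y [0..<length u] = u" and "\<forall>a\<in>set u. a < m"
    using assms unfolding Pref_def Pref_k_def cyl_def by auto
  moreover have "map y [0..<length (take j u)] = take j u"
  proof -
    have "take j u = map y (take j [0..<length u])" using y(2) by (metis take_map)
    then show ?thesis by (simp add: min_def)
  qed
  ultimately have "take j u \<in> Pref_k m (length (take j u)) \<Omega>"
    unfolding Pref_k_def cyl_def by (auto dest: in_set_takeD)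
  then show ?thesis unfolding Pref_def by auto
qed

lemma mu_cyl_pos:
  assumes "u \<in> Pref m \<Omega>" "\<And>v. v \<in> Pref m \<Omega> \<Longrightarrow> 0 < t v"
  shows "0 < mu_cyl m q \<Omega> t u"
  unfolding mu_cyl_def using assms by (auto intro!: prod_pos divide_pos_pos zero_less_power Pref_take)

lemma ln_mu_cyl:
  assumes "u \<in> Pref m \<Omega>" "\<And>v. v \<in> Pref m \<Omega> \<Longrightarrow> 0 < t v"
  shows "ln (mu_cyl m q \<Omega> t u)
           = (\<Sum>j=1..length u. ln (t (take j u)) - q * ln (t (take (j - 1) u)))"
proof -
  have pos: "0 < t (take j u)" for j using assms by (blast intro: Pref_take)
  then have nonzero: "t (take j u) \<noteq> 0" for j by (simp add: less_imp_neq[symmetric])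
  have "ln (mu_cyl m q \<Omega> t u) = (\<Sum>j=1..length u. ln (t (take j u) / t (take (j - 1) u) ^ q))"
    unfolding mu_cyl_def using assms(1) nonzero by (simp add: ln_prod)
  also have "\<dots> = (\<Sum>j=1..length u. ln (t (take j u)) - q * ln (t (take (j - 1) u)))"
    using nonzero by (simp add: ln_div ln_realpow)
  finally show ?thesis .
qed

lemma sum_shift_down:
  fixes f :: "nat \<Rightarrow> real"
  shows "(\<Sum>j=1..k. f (j - 1)) = f 0 - f k + (\<Sum>j=1..k. f j)"
  by (induction k) simp_all

definition orbit_sum :: "(nat \<Rightarrow> nat \<Rightarrow> real) \<Rightarrow> nat \<Rightarrow> nat \<Rightarrow> real" where
  "orbit_sum g q n = (\<Sum>i\<in>nondiv_upto q n. \<Sum>j=1..orbit_len q n i. g i j)"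

definition orbit_last :: "(nat \<Rightarrow> nat \<Rightarrow> real) \<Rightarrow> nat \<Rightarrow> nat \<Rightarrow> real" where
  "orbit_last g q n = (\<Sum>i\<in>nondiv_upto q n. g i (orbit_len q n i))"

lemma ln_P_mu_prefix:
  assumes "q \<ge> 2" "x \<in> X_Omega m q \<Omega>" "\<Omega> \<subseteq> Sigma m"
    and tpos: "\<And>v. v \<in> Pref m \<Omega> \<Longrightarrow> 0 < t v"
  defines "g \<equiv> \<lambda>i j. ln (t (orbit_word q x i j))"
  shows "ln (P_mu m q \<Omega> t (map x [0..<n]))
           = orbit_sum g q n - q * (card (nondiv_upto q n) * ln (t []) - orbit_last g q n
                                    + orbit_sum g q n)"
proof -
  let ?w = "\<lambda>i. orbit_word q x i (orbit_len q n i)"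
  have Pref: "?w i \<in> Pref m \<Omega>" if "i \<in> nondiv_upto q n" for i
    using orbit_word_Pref assms(2,3) that by (auto simp: nondiv_upto_def)
  txt \<open>The contribution of one orbit; its empty word contributes g i 0 = ln t_empty.\<close>
  have orbit: "ln (mu_cyl m q \<Omega> t (?w i))
      = (\<Sum>j=1..orbit_len q n i. g i j) - q * (ln (t []) - g i (orbit_len q n i)
                                               + (\<Sum>j=1..orbit_len q n i. g i j))"
    if "i \<in> nondiv_upto q n" for i
  proof -
    have "ln (mu_cyl m q \<Omega> t (?w i))
        = (\<Sum>j=1..length (?w i). ln (t (take j (?w i))) - q * ln (t (take (j - 1) (?w i))))"
      by (rule ln_mu_cyl[of "?w i" m \<Omega> t q, OF Pref[OF that] tpos])
    also have "\<dots> = (\<Sum>j=1..orbit_len q n i. g i j - q * g i (j - 1))"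
    proof (rule sum.cong)
      fix j assume "j \<in> {1..orbit_len q n i}"
      then have "j \<le> orbit_len q n i" "j - 1 \<le> orbit_len q n i" by auto
      then show "ln (t (take j (?w i))) - q * ln (t (take (j - 1) (?w i))) = g i j - q * g i (j - 1)"
        by (simp add: g_def take_orbit_word)
    qed simp
    also have "\<dots> = (\<Sum>j=1..orbit_len q n i. g i j) - q * (\<Sum>j=1..orbit_len q n i. g i (j - 1))"
      by (simp add: sum_subtractf sum_distrib_left)
    finally show ?thesis unfolding sum_shift_down[of "g i"] by (simp add: g_def orbit_word_def)
  qed
  have "P_mu m q \<Omega> t (map x [0..<n]) = (\<Prod>i\<in>nondiv_upto q n. mu_cyl m q \<Omega> t (?w i))"
    unfolding P_mu_def nondiv_upto_def using assms(1) by (intro prod.cong) (auto simp: restrJ_prefix)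
  moreover have "mu_cyl m q \<Omega> t (?w i) \<noteq> 0" if "i \<in> nondiv_upto q n" for i
    using mu_cyl_pos[of "?w i" m \<Omega> t q, OF Pref[OF that] tpos] by linarith
  ultimately have "ln (P_mu m q \<Omega> t (map x [0..<n])) = (\<Sum>i\<in>nondiv_upto q n. ln (mu_cyl m q \<Omega> t (?w i)))"
    by (simp add: ln_prod)
  also have "\<dots> = orbit_sum g q n - q * (card (nondiv_upto q n) * ln (t []) - orbit_last g q n
                                          + orbit_sum g q n)"
    unfolding orbit_sum_def orbit_last_def
    by (simp add: orbit sum_subtractf sum_distrib_left sum.distrib algebra_simps)
  finally show ?thesis .
qed

text \<open>Passing from n to q n appends one letter to each orbit; new orbits start empty.\<close>
lemma orbit_sum_mult:
  assumes "q \<ge> 2"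
  shows "orbit_sum g q (q * n) = orbit_sum g q n + orbit_last g q (q * n)"
proof -
  have grow: "(\<Sum>j=1..orbit_len q (q * n) i. g i j) = (\<Sum>j=1..orbit_len q n i. g i j)
                + g i (orbit_len q (q * n) i)" if "i \<in> nondiv_upto q (q * n)" for i
    using orbit_len_mult[OF assms] that by (simp add: nondiv_upto_def)
  have old: "(\<Sum>i\<in>nondiv_upto q (q * n). \<Sum>j=1..orbit_len q n i. g i j) = orbit_sum g q n"
    unfolding orbit_sum_def
  proof (rule sum.mono_neutral_right)
    show "nondiv_upto q n \<subseteq> nondiv_upto q (q * n)"
      using assms by (auto simp: nondiv_upto_def intro: order_trans[of _ n "q * n"])
    show "\<forall>i\<in>nondiv_upto q (q * n) - nondiv_upto q n. (\<Sum>j=1..orbit_len q n i. g i j) = 0"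
    proof
      fix i assume "i \<in> nondiv_upto q (q * n) - nondiv_upto q n"
      then have "1 \<le> i" "n < i" by (auto simp: nondiv_upto_def)
      then show "(\<Sum>j=1..orbit_len q n i. g i j) = 0" using orbit_len_beyond[OF assms] by simp
    qed
  qed simp
  have "orbit_sum g q (q * n)
      = (\<Sum>i\<in>nondiv_upto q (q * n). (\<Sum>j=1..orbit_len q n i. g i j) + g i (orbit_len q (q * n) i))"
    unfolding orbit_sum_def by (rule sum.cong[OF refl grow])
  also have "\<dots> = orbit_sum g q n + orbit_last g q (q * n)"
    unfolding sum.distrib old orbit_last_def ..
  finally show ?thesis .
qed

lemma orbit_sum_bounds:
  assumes "q \<ge> 2" and g: "\<And>i j. 1 \<le> i \<Longrightarrow> \<not> q dvd i \<Longrightarrow> 0 \<le> g i j \<and> g i j \<le> B"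
  shows "0 \<le> orbit_sum g q (q ^ l) \<and> orbit_sum g q (q ^ l) \<le> 2 * B * q ^ l"
proof -
  have g': "0 \<le> g i j" "g i j \<le> B" if "i \<in> nondiv_upto q n" for i j n
    using g that by (auto simp: nondiv_upto_def)
  have "\<not> q dvd 1" using assms(1) by simp
  then have "B \<ge> 0" using g[of 1] by force
  have "orbit_sum g q (q ^ l) \<le> 2 * B * q ^ l"
  proof (induction l)
    case 0
    have "nondiv_upto q 1 = {1}" using \<open>\<not> q dvd 1\<close> by (auto simp: nondiv_upto_def)
    moreover have "orbit_len q 1 1 = 1"
      using orbit_len_le[OF assms(1), of 1 1] orbit_len_pos[OF assms(1), of 1 1] by simp
    ultimately show ?case using g'[of 1 1 1] \<open>B \<ge> 0\<close> by (simp add: orbit_sum_def)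
  next
    case (Suc l)
    have "orbit_last g q (q * q ^ l) \<le> card (nondiv_upto q (q * q ^ l)) * B"
      unfolding orbit_last_def by (rule sum_bounded_above) (rule g'(2))
    also have "\<dots> \<le> q * q ^ l * B"
      using card_nondiv_upto_mult[of q "q ^ l"] assms(1) \<open>B \<ge> 0\<close>
      by (intro mult_right_mono) simp_all
    finally have "orbit_sum g q (q ^ Suc l) \<le> 2 * B * q ^ l + q * q ^ l * B"
      using Suc orbit_sum_mult[OF assms(1), of g "q ^ l"] by simp
    also have "\<dots> \<le> 2 * B * q ^ Suc l"
    proof -
      have "2 * real q ^ l \<le> real q * real q ^ l" using assms(1) by (intro mult_right_mono) auto
      then have "B * (2 * real q ^ l) \<le> B * (real q * real q ^ l)"
        using \<open>B \<ge> 0\<close> by (rule mult_left_mono)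
      then show ?thesis by (simp add: algebra_simps)
    qed
    finally show ?case .
  qed
  moreover have "0 \<le> orbit_sum g q n" for n
    unfolding orbit_sum_def using g' by (intro sum_nonneg) auto
  ultimately show ?thesis by simp
qed

lemma a_seq_telescoping:
  assumes "m \<ge> 2" "q \<ge> 2" "x \<in> X_Omega m q \<Omega>" "\<Omega> \<subseteq> Sigma m"
    and "\<And>v. v \<in> Pref m \<Omega> \<Longrightarrow> 0 < t v"
  defines "g \<equiv> \<lambda>i j. ln (t (orbit_word q x i j))"
  defines "b \<equiv> \<lambda>l. orbit_sum g q (q ^ l) / (real q ^ l * ln m)"
  shows "a_seq m q \<Omega> t (Suc l) x = (real q - 1) * log m (t []) + (b l - b (Suc l))"
proof -
  let ?n = "q ^ l"
  have card: "real (card (nondiv_upto q (q * ?n))) = real q * real ?n - real ?n"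
    using card_nondiv_upto_mult[of q ?n] assms(2) by simp
  have "0 < ln (real m)" "0 < real q" using assms(1,2) by simp_all
  have "ln (P_mu m q \<Omega> t (map x [0..<q * ?n]))
          = orbit_sum g q (q * ?n) - q * (card (nondiv_upto q (q * ?n)) * ln (t [])
              - orbit_last g q (q * ?n) + orbit_sum g q (q * ?n))"
    unfolding g_def by (rule ln_P_mu_prefix[OF assms(2-5)])
  also have "\<dots> = orbit_sum g q (q * ?n) - q * card (nondiv_upto q (q * ?n)) * ln (t [])
                     - q * orbit_sum g q ?n"
    using orbit_sum_mult[OF assms(2), of g ?n] by (simp add: algebra_simps)
  finally have lnP: "ln (P_mu m q \<Omega> t (map x [0..<q * ?n]))
          = orbit_sum g q (q * ?n) - q * card (nondiv_upto q (q * ?n)) * ln (t []) - q * orbit_sum g q ?n" .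
  show ?thesis
    using \<open>0 < ln (real m)\<close> \<open>0 < real q\<close> unfolding a_seq_def Let_def log_def b_def
    by (simp add: lnP card field_simps)
qed

theorem lemma5p2:
  fixes m q :: nat and \<Omega> :: "(nat \<Rightarrow> nat) set" and t :: "nat list \<Rightarrow> real"
  assumes "m \<ge> 2" and "q \<ge> 2"
    and "\<Omega> \<noteq> {}" and "\<Omega> \<subseteq> Sigma m" and "closed \<Omega>"
    and "\<And>u. u \<in> Pref m \<Omega> \<Longrightarrow> 1 \<le> t u \<and> t u \<le> real m powr (1 / (real q - 1))"
    and "\<And>u. u \<in> Pref m \<Omega> \<Longrightarrow>
           t u ^ q = (\<Sum>j\<in>{j. j < m \<and> u @ [j] \<in> Pref m \<Omega>}. t (u @ [j]))"
    and "x \<in> X_Omega m q \<Omega>"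
  shows "((\<lambda>l. (\<Sum>k=1..l. a_seq m q \<Omega> t k x) / real l)
           \<longlonglongrightarrow> (real q - 1) * log m (t [])) \<and>
         liminf (\<lambda>l. ereal (a_seq m q \<Omega> t l x)) \<le> ereal ((real q - 1) * log m (t []))"
proof -
  define g where "g = (\<lambda>i j. ln (t (orbit_word q x i j)))"
  define b where "b = (\<lambda>l. orbit_sum g q (q ^ l) / (real q ^ l * ln m))"
  define B where "B = ln (real m) / (real q - 1)"
  have tpos: "0 < t v" if "v \<in> Pref m \<Omega>" for v using assms(6)[OF that] by linarith
  have "0 \<le> g i j \<and> g i j \<le> B" if "1 \<le> i" "\<not> q dvd i" for i j
  proof -
    have "1 \<le> t (orbit_word q x i j)" "t (orbit_word q x i j) \<le> real m powr (1 / (real q - 1))"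
      using assms(6)[OF orbit_word_Pref[OF assms(8,4) that]] by auto
    then have "ln (t (orbit_word q x i j)) \<le> ln (real m powr (1 / (real q - 1)))"
      by (intro ln_mono) auto
    then show ?thesis using \<open>1 \<le> t _\<close> assms(1) by (simp add: g_def B_def)
  qed
  then have "\<bar>b l\<bar> \<le> 2 * B / ln m" for l
    using orbit_sum_bounds[OF assms(2), of g B l] assms(1,2)
    by (simp add: b_def divide_simps)
  moreover have "a_seq m q \<Omega> t (Suc l) x = (real q - 1) * log m (t []) + (b l - b (Suc l))" for l
    unfolding b_def g_def by (rule a_seq_telescoping[OF assms(1,2,8,4) tpos])
  ultimately show ?thesis
    using telescoping_cesaro[where a = "\<lambda>k. a_seq m q \<Omega> t k x" and b = b]
      telescoping_liminf[where a = "\<lambda>k. a_seq m q \<Omega> t k x" and b = b] by blast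
qed

end
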